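(* Let $\Phi \in \mathbb{R}^{m\times n}$ have unit $\ell_2$-norm columns $\phi_1,\dots,\phi_n$, let $X \in \mathbb{R}^{n\times K}$ with support $S=\mathrm{supp}(X)$, let $\overline{S}=[n]\setminus S$, assume $\Phi_S$ has full column rank, let $E\in\mathbb{R}^{m\times K}$ be arbitrary and $Y=\Phi X + E$. Let $q_1,\dots,q_K\ge 0$, $Q=\mathrm{diag}(q_1,\dots,q_K)$. Run SOMP-NS on $Y$, $\Phi$ with weights $q_k$, and let $t<|S|$ be such that all atoms selected before iteration $t$ belong to $S$, i.e. $S_t\subseteq S$. Let $P^{(t)}=\Phi_{S_t}\Phi_{S_t}^{+}$ (with $P^{(0)}=0$), $Z^{(t)}=(I-P^{(t)})\Phi X$ and $E^{(t)}=(I-P^{(t)})E$. If $$\left(1-\|\Phi_S^{+}\Phi_{\overline{S}}\|_{1}\right)\|\Phi_S^{\mathrm{T}} Z^{(t)} Q\|_{\infty} > 2\,\|\Phi^{\mathrm{T}} E^{(t)} Q\|_{\infty},$$ then the atom $j_t$ selected at iteration $t$ belongs to $S$ (regardless of tie-breaking).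
   Context: For $S\subseteq[n]$, $\Phi_S$ is the submatrix of columns indexed by $S$; $A^+$ is the Moore–Penrose pseudoinverse; $\|A\|_\infty=\max_i\sum_j|A_{i,j}|$ and $\|A\|_1=\max_j\sum_i|A_{i,j}|$. $\mathrm{supp}(X)$ is the set of row indices $i$ with $X_{i,k}\ne0$ for some $k$. Algorithm SOMP-NS, on input $Y\in\mathbb{R}^{m\times K}$, $\Phi$, weights $q_k\ge0$: set $S_0=\emptyset$, $R^{(0)}=Y$; at iteration $t=0,1,\dots$: choose $j_t\in\arg\max_{j\in[n]}\sum_{k=1}^K q_k|\langle r^{(t)}_k,\phi_j\rangle|$ where $r^{(t)}_k$ is the $k$-th column of $R^{(t)}$; set $S_{t+1}=S_t\cup\{j_t\}$ and $R^{(t+1)}=(I-\Phi_{S_{t+1}}\Phi_{S_{t+1}}^+)Y$. *)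

theory Defs
  imports "Jordan_Normal_Form.DL_Rank" "Jordan_Normal_Form.DL_Submatrix"
begin

definition cols_sub :: "real mat \<Rightarrow> nat set \<Rightarrow> real mat" where
  "cols_sub A S = submatrix A UNIV S"

definition pinv :: "real mat \<Rightarrow> real mat" where
  "pinv A = (THE B. B \<in> carrier_mat (dim_col A) (dim_row A) \<and>
     A * B * A = A \<and> B * A * B = B \<and>
     transpose_mat (A * B) = A * B \<and> transpose_mat (B * A) = B * A)"

definition norm_inf :: "real mat \<Rightarrow> real" where
  "norm_inf A = Max (insert 0 {(\<Sum>j<dim_col A. \<bar>A $$ (i,j)\<bar>) | i. i < dim_row A})"

definition norm_one :: "real mat \<Rightarrow> real" where
  "norm_one A = Max (insert 0 {(\<Sum>i<dim_row A. \<bar>A $$ (i,j)\<bar>) | j. j < dim_col A})"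

definition supp_rows :: "real mat \<Rightarrow> nat set" where
  "supp_rows X = {i. i < dim_row X \<and> (\<exists>k < dim_col X. X $$ (i,k) \<noteq> 0)}"

definition proj :: "real mat \<Rightarrow> nat set \<Rightarrow> real mat" where
  "proj Phi T = cols_sub Phi T * pinv (cols_sub Phi T)"

definition resid :: "real mat \<Rightarrow> nat set \<Rightarrow> real mat \<Rightarrow> real mat" where
  "resid Phi T Y = (1\<^sub>m (dim_row Phi) - proj Phi T) * Y"

definition somp_score :: "real mat \<Rightarrow> (nat \<Rightarrow> real) \<Rightarrow> real mat \<Rightarrow> nat \<Rightarrow> real" where
  "somp_score Phi q R j = (\<Sum>k<dim_col R. q k * \<bar>\<Sum>i<dim_row R. R $$ (i,k) * Phi $$ (i,j)\<bar>)"

definition somp_argmax :: "real mat \<Rightarrow> (nat \<Rightarrow> real) \<Rightarrow> real mat \<Rightarrow> nat set \<Rightarrow> nat \<Rightarrow> bool" where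
  "somp_argmax Phi q Y T j \<longleftrightarrow> j < dim_col Phi \<and>
     (\<forall>j' < dim_col Phi. somp_score Phi q (resid Phi T Y) j' \<le> somp_score Phi q (resid Phi T Y) j)"

definition somp_run :: "real mat \<Rightarrow> (nat \<Rightarrow> real) \<Rightarrow> real mat \<Rightarrow> (nat \<Rightarrow> nat) \<Rightarrow> nat \<Rightarrow> bool" where
  "somp_run Phi q Y sel t \<longleftrightarrow> (\<forall>s < t. somp_argmax Phi q Y (sel ` {..<s}) (sel s))"

end

theory Submission
  imports Defs
begin

(*
  Write A = Phi_S and P_S = A A^+, the orthogonal projector onto the range of A. Because X is
  supported on S and S_t is contained in S, the noiseless residual Z = (I - P_t) Phi X lies in
  range A, so P_S Z = Z. For an atom j outside S this gives <z_k, phi_j> = <z_k, P_S phi_j>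
  = (A^+ phi_j)^T A^T z_k, hence its weighted score on Z is at most
  ||A^+ Phi_Sbar||_1 ||A^T Z Q||_inf, whereas the best atom of S scores exactly ||A^T Z Q||_inf.
  The noise changes every score by at most ||Phi^T E_t Q||_inf, so under the stated condition
  some atom of S strictly beats every atom outside S.
  Full column rank of A makes (A^T A)^-1 A^T a Penrose inverse, which identifies pinv.
*)

definition pick_index :: "nat set \<Rightarrow> nat \<Rightarrow> nat" where
  "pick_index T j = card {a\<in>T. a < j}"

lemma
  assumes "finite T" "j \<in> T"
  shows pick_index_less_card: "pick_index T j < card T"
    and pick_pick_index: "pick T (pick_index T j) = j"
proof -
  have "{a\<in>T. a < j} \<subset> T" using assms(2) by auto
  then show "pick_index T j < card T" unfolding pick_index_def using assms(1) psubset_card_mono by blast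
  show "pick T (pick_index T j) = j" unfolding pick_index_def using pick_card_in_set[OF assms(2)] .
qed

lemma pick_index_pick: "b < card T \<Longrightarrow> pick_index T (pick T b) = b"
  unfolding pick_index_def using card_pick by auto

lemma bij_betw_pick: "finite T \<Longrightarrow> bij_betw (pick T) {..<card T} T"
  by (rule bij_betw_byWitness[where f' = "pick_index T"])
    (auto simp: pick_index_pick pick_pick_index pick_index_less_card pick_in_set)

lemma sum_pick: "finite T \<Longrightarrow> (\<Sum>b<card T. f (pick T b)) = (\<Sum>j\<in>T. f j)"
  using sum.reindex_bij_betw[OF bij_betw_pick] by blast

lemma index_mult_mat_sum:
  assumes "A \<in> carrier_mat nr p" "B \<in> carrier_mat p nc" "i < nr" "j < nc"
  shows "(A * B) $$ (i,j) = (\<Sum>r<p. A $$ (i,r) * B $$ (r,j))"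
  using assms by (auto simp: scalar_prod_def atLeast0LessThan intro!: sum.cong)

lemma index_mult_mat_vec_sum:
  assumes "A \<in> carrier_mat nr p" "v \<in> carrier_vec p" "i < nr"
  shows "(A *\<^sub>v v) $ i = (\<Sum>r<p. A $$ (i,r) * v $ r)"
  using assms by (auto simp: scalar_prod_def atLeast0LessThan intro!: sum.cong)

lemma cols_sub_carrier_mat:
  assumes "Phi \<in> carrier_mat m n" "T \<subseteq> {..<n}"
  shows "cols_sub Phi T \<in> carrier_mat m (card T)"
proof -
  have "{j. j < dim_col Phi \<and> j \<in> T} = T" "{i. i < dim_row Phi \<and> i \<in> UNIV} = {..<m}"
    using assms by auto
  then have "dim_row (submatrix Phi UNIV T) = m" "dim_col (submatrix Phi UNIV T) = card T"
    unfolding dim_submatrix by simp_all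
  then show ?thesis unfolding cols_sub_def by blast
qed

lemma cols_sub_index:
  assumes "Phi \<in> carrier_mat m n" "T \<subseteq> {..<n}" "i < m" "b < card T"
  shows "cols_sub Phi T $$ (i,b) = Phi $$ (i, pick T b)"
proof -
  have "{j. j < dim_col Phi \<and> j \<in> T} = T" "{i. i < dim_row Phi \<and> i \<in> UNIV} = {..<m}"
    using assms(1,2) by auto
  then show ?thesis unfolding cols_sub_def using submatrix_index[of i Phi UNIV b T] assms
    by (simp add: pick_UNIV)
qed

lemma cols_sub_eq_mult_cols_sub_one:
  assumes Phi: "Phi \<in> carrier_mat m n" and Tn: "T \<subseteq> {..<n}"
  shows "cols_sub Phi T = Phi * cols_sub (1\<^sub>m n) T"
proof (rule eq_matI)
  have I: "cols_sub (1\<^sub>m n) T \<in> carrier_mat n (card T)" using cols_sub_carrier_mat[OF one_carrier_mat Tn] .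
  fix i b assume "i < dim_row (Phi * cols_sub (1\<^sub>m n) T)" "b < dim_col (Phi * cols_sub (1\<^sub>m n) T)"
  then have i: "i < m" and b: "b < card T" using Phi I by auto
  then have p: "pick T b < n" using pick_in_set[of b T] Tn by auto
  have "(Phi * cols_sub (1\<^sub>m n) T) $$ (i,b) = (\<Sum>r<n. Phi $$ (i,r) * (if r = pick T b then 1 else 0))"
    using index_mult_mat_sum[OF Phi I i b] cols_sub_index[OF one_carrier_mat Tn _ b] p
    by (auto intro: sum.cong)
  also have "\<dots> = Phi $$ (i, pick T b)" using p by (simp add: if_distrib cong: if_cong)
  finally show "cols_sub Phi T $$ (i,b) = (Phi * cols_sub (1\<^sub>m n) T) $$ (i,b)"
    using cols_sub_index[OF Phi Tn i b] by simp
qed (use Phi cols_sub_carrier_mat[OF Phi Tn] cols_sub_carrier_mat[OF one_carrier_mat Tn] in auto)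

lemma transpose_cols_sub_mult_index:
  assumes Phi: "Phi \<in> carrier_mat m n" and Tn: "T \<subseteq> {..<n}" and N: "N \<in> carrier_mat m K"
    and b: "b < card T" and k: "k < K"
  shows "(transpose_mat (cols_sub Phi T) * N) $$ (b,k) = (transpose_mat Phi * N) $$ (pick T b, k)"
proof -
  have A: "transpose_mat (cols_sub Phi T) \<in> carrier_mat (card T) m"
    using cols_sub_carrier_mat[OF Phi Tn] by simp
  have P: "transpose_mat Phi \<in> carrier_mat n m" using Phi by simp
  have "pick T b < n" using pick_in_set[of b T] Tn b by auto
  then show ?thesis
    using index_mult_mat_sum[OF A N b k] index_mult_mat_sum[OF P N _ k] cols_sub_carrier_mat[OF Phi Tn] Phi b
    by (auto simp: cols_sub_index[OF Phi Tn _ b] intro: sum.cong)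
qed

lemma cols_sub_mult_vec_index:
  assumes Phi: "Phi \<in> carrier_mat m n" and Tn: "T \<subseteq> {..<n}" and v: "v \<in> carrier_vec (card T)"
    and i: "i < m"
  shows "(cols_sub Phi T *\<^sub>v v) $ i = (\<Sum>j\<in>T. Phi $$ (i,j) * v $ pick_index T j)"
proof -
  have "(cols_sub Phi T *\<^sub>v v) $ i = (\<Sum>b<card T. Phi $$ (i, pick T b) * v $ pick_index T (pick T b))"
    using index_mult_mat_vec_sum[OF cols_sub_carrier_mat[OF Phi Tn] v i]
    by (simp add: cols_sub_index[OF Phi Tn i] pick_index_pick)
  also have "\<dots> = (\<Sum>j\<in>T. Phi $$ (i,j) * v $ pick_index T j)"
    using sum_pick[OF finite_subset[OF Tn finite_lessThan], of "\<lambda>j. Phi $$ (i,j) * v $ pick_index T j"]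
    by simp
  finally show ?thesis .
qed

lemma cols_sub_mult_vec_eq_0_mono:
  assumes Phi: "Phi \<in> carrier_mat m n" and Sn: "S \<subseteq> {..<n}" and TS: "T \<subseteq> S"
    and kerS: "\<And>w. w \<in> carrier_vec (card S) \<Longrightarrow> cols_sub Phi S *\<^sub>v w = 0\<^sub>v m \<Longrightarrow> w = 0\<^sub>v (card S)"
    and v: "v \<in> carrier_vec (card T)" and Tv: "cols_sub Phi T *\<^sub>v v = 0\<^sub>v m"
  shows "v = 0\<^sub>v (card T)"
proof -
  have fS: "finite S" using Sn finite_subset by blast
  have Tn: "T \<subseteq> {..<n}" using TS Sn by blast
  \<comment> \<open>extend v by zero from the columns T to the columns S\<close>
  define w where "w = vec (card S) (\<lambda>a. if pick S a \<in> T then v $ pick_index T (pick S a) else 0)"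
  have w: "w \<in> carrier_vec (card S)" unfolding w_def by simp
  have "cols_sub Phi S *\<^sub>v w = 0\<^sub>v m"
  proof (rule eq_vecI)
    fix i assume "i < dim_vec (0\<^sub>v m)"
    then have i: "i < m" by simp
    have "(cols_sub Phi S *\<^sub>v w) $ i = (\<Sum>j\<in>S. Phi $$ (i,j) * (if j \<in> T then v $ pick_index T j else 0))"
      unfolding cols_sub_mult_vec_index[OF Phi Sn w i]
      by (intro sum.cong) (simp_all add: w_def pick_index_less_card[OF fS] pick_pick_index[OF fS])
    also have "\<dots> = (\<Sum>j\<in>T. Phi $$ (i,j) * v $ pick_index T j)"
      using fS TS by (intro sum.mono_neutral_cong_right) auto
    also have "\<dots> = 0" using cols_sub_mult_vec_index[OF Phi Tn v i] Tv i by simp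
    finally show "(cols_sub Phi S *\<^sub>v w) $ i = 0\<^sub>v m $ i" using i by simp
  qed (use cols_sub_carrier_mat[OF Phi Sn] in simp)
  then have w0: "w = 0\<^sub>v (card S)" using kerS[OF w] by blast
  show ?thesis
  proof (rule eq_vecI)
    fix b assume "b < dim_vec (0\<^sub>v (card T))"
    then have b: "b < card T" by simp
    then have "pick T b \<in> S" using pick_in_set[of b T] TS by blast
    then have "pick_index S (pick T b) < card S" "w $ pick_index S (pick T b) = v $ b"
      using b pick_index_less_card[OF fS] pick_pick_index[OF fS] pick_in_set[of b T] pick_index_pick
      by (auto simp: w_def)
    then show "v $ b = 0\<^sub>v (card T) $ b" using w0 b by simp
  qed (use v in simp)
qed

context vec_space
begin

lemma rank_le_card_set_cols:
  assumes "A \<in> carrier_mat n nc"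
  shows "rank A \<le> card (set (cols A))"
proof -
  obtain S where S: "maximal S (\<lambda>T. T \<subseteq> set (cols A) \<and> lin_indpt T)"
    using maximal_exists[of "\<lambda>T. T \<subseteq> set (cols A) \<and> lin_indpt T" "card (set (cols A))" "{}"]
    by (meson List.finite_set card_mono empty_iff empty_subsetI finite_lin_indpt2 rev_finite_subset)
  then have "card S \<le> card (set (cols A))" by (simp add: card_mono maximal_def)
  then show ?thesis using rank_card_indpt[OF assms S] by simp
qed

lemma full_rank_mult_vec_eq_0:
  assumes A: "A \<in> carrier_mat n nc" and r: "rank A = nc"
    and v: "v \<in> carrier_vec nc" and Av: "A *\<^sub>v v = 0\<^sub>v n"
  shows "v = 0\<^sub>v nc"
proof (rule ccontr)
  assume nz: "v \<noteq> 0\<^sub>v nc"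
  have d: "distinct (cols A)"
  proof (rule ccontr)
    assume "\<not> distinct (cols A)"
    then have "card (set (cols A)) < nc"
      using card_distinct[of "cols A"] card_length[of "cols A"] A by fastforce
    then show False using rank_le_card_set_cols[OF A] r by linarith
  qed
  show False using full_rank_lin_indpt[OF A r d] lin_depI[OF A v nz Av d] by blast
qed

end

definition penrose_inverse :: "real mat \<Rightarrow> real mat \<Rightarrow> bool" where
  "penrose_inverse A B \<longleftrightarrow> B \<in> carrier_mat (dim_col A) (dim_row A) \<and>
     A * B * A = A \<and> B * A * B = B \<and>
     transpose_mat (A * B) = A * B \<and> transpose_mat (B * A) = B * A"

lemma penrose_inverse_transpose_absorb:
  assumes A: "A \<in> carrier_mat nr nc" and B: "penrose_inverse A B"
  shows "transpose_mat A = transpose_mat A * (A * B)"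
    and "transpose_mat A = (B * A) * transpose_mat A"
proof -
  have Bc: "B \<in> carrier_mat nc nr" using A B unfolding penrose_inverse_def by auto
  have AB: "A * B \<in> carrier_mat nr nr" and BA: "B * A \<in> carrier_mat nc nc" using A Bc by auto
  have "transpose_mat A = transpose_mat ((A * B) * A)" using B unfolding penrose_inverse_def by simp
  also have "\<dots> = transpose_mat A * transpose_mat (A * B)" using transpose_mult[OF AB A] .
  finally show "transpose_mat A = transpose_mat A * (A * B)" using B unfolding penrose_inverse_def by simp
  have "transpose_mat A = transpose_mat (A * (B * A))"
    using B assoc_mult_mat[OF A Bc A] unfolding penrose_inverse_def by simp
  also have "\<dots> = transpose_mat (B * A) * transpose_mat A" using transpose_mult[OF A BA] .
  finally show "transpose_mat A = (B * A) * transpose_mat A" using B unfolding penrose_inverse_def by simp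
qed

lemma penrose_inverse_unique:
  assumes A: "A \<in> carrier_mat nr nc" and pB: "penrose_inverse A B" and pC: "penrose_inverse A C"
  shows "B = C"
proof -
  have B: "B \<in> carrier_mat nc nr" and C: "C \<in> carrier_mat nc nr"
    using pB pC A unfolding penrose_inverse_def by auto
  have b2: "B * A * B = B" and b3: "transpose_mat (A * B) = A * B"
    using pB unfolding penrose_inverse_def by auto
  have c2: "C * A * C = C" and c4: "transpose_mat (C * A) = C * A"
    using pC unfolding penrose_inverse_def by auto
  have TA: "transpose_mat A \<in> carrier_mat nc nr" and TB: "transpose_mat B \<in> carrier_mat nr nc"
    and TC: "transpose_mat C \<in> carrier_mat nr nc" using A B C by auto
  have AB: "A * B \<in> carrier_mat nr nr" and AC: "A * C \<in> carrier_mat nr nr"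
    and BA: "B * A \<in> carrier_mat nc nc" and CA: "C * A \<in> carrier_mat nc nc" using A B C by auto
  have AB_T: "A * B = transpose_mat B * transpose_mat A" using b3 transpose_mult[OF A B] by simp
  have CA_T: "C * A = transpose_mat A * transpose_mat C" using c4 transpose_mult[OF C A] by simp
  have "B = B * (A * B)" using b2 assoc_mult_mat[OF B A B] by simp
  also have "\<dots> = B * (transpose_mat B * transpose_mat A)" using AB_T by simp
  also have "\<dots> = B * (transpose_mat B * (transpose_mat A * (A * C)))"
    using penrose_inverse_transpose_absorb(1)[OF A pC] by simp
  also have "\<dots> = B * ((transpose_mat B * transpose_mat A) * (A * C))"
    using assoc_mult_mat[OF TB TA AC] by simp
  also have "\<dots> = (B * (A * B)) * (A * C)" using AB_T assoc_mult_mat[OF B AB AC] by simp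
  also have "\<dots> = B * (A * C)" using b2 assoc_mult_mat[OF B A B] by simp
  finally have eB: "B = B * (A * C)" .
  have "C = (C * A) * C" using c2 by simp
  also have "\<dots> = (transpose_mat A * transpose_mat C) * C" using CA_T by simp
  also have "\<dots> = (((B * A) * transpose_mat A) * transpose_mat C) * C"
    using penrose_inverse_transpose_absorb(2)[OF A pB] by simp
  also have "\<dots> = ((B * A) * (transpose_mat A * transpose_mat C)) * C"
    using assoc_mult_mat[OF BA TA TC] by simp
  also have "\<dots> = (B * A) * ((C * A) * C)" using CA_T assoc_mult_mat[OF BA CA C] by simp
  also have "\<dots> = B * (A * C)" using c2 assoc_mult_mat[OF B A C] by simp
  finally show ?thesis using eB by simp
qed

lemma det_gram_mat_neq_0:
  assumes A: "A \<in> carrier_mat nr nc"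
    and ker: "\<And>v. v \<in> carrier_vec nc \<Longrightarrow> A *\<^sub>v v = 0\<^sub>v nr \<Longrightarrow> v = 0\<^sub>v nc"
  shows "det (transpose_mat A * A) \<noteq> (0 :: real)"
proof
  have TA: "transpose_mat A \<in> carrier_mat nc nr" using A by simp
  assume "det (transpose_mat A * A) = 0"
  then obtain v where v: "v \<in> carrier_vec nc" "v \<noteq> 0\<^sub>v nc" "transpose_mat A * A *\<^sub>v v = 0\<^sub>v nc"
    using det_0_iff_vec_prod_zero_field[of "transpose_mat A * A" nc] A by auto
  define w where "w = A *\<^sub>v v"
  have w: "w \<in> carrier_vec nr" unfolding w_def using A v by auto
  \<comment> \<open>|Av|^2 = v^T (A^T A) v = 0\<close>
  have "w \<bullet> w = v \<bullet> (transpose_mat A *\<^sub>v w)"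
    using transpose_vec_mult_scalar[OF TA w v(1)] unfolding w_def by simp
  also have "transpose_mat A *\<^sub>v w = 0\<^sub>v nc" unfolding w_def using TA A v by simp
  finally have "(\<Sum>i\<in>{0..<nr}. w $ i * w $ i) = 0" using w v(1) unfolding scalar_prod_def by simp
  then have "\<forall>i\<in>{0..<nr}. w $ i * w $ i = 0" by (subst sum_nonneg_eq_0_iff[symmetric]) auto
  then have "w = 0\<^sub>v nr" using w by (intro eq_vecI) auto
  then show False using ker v unfolding w_def by blast
qed

lemma symmetric_inverse_mat_symmetric:
  fixes G :: "'a :: comm_ring_1 mat"
  assumes G: "G \<in> carrier_mat n n" and sym: "transpose_mat G = G"
    and Gi: "Gi \<in> carrier_mat n n" "G * Gi = 1\<^sub>m n"
  shows "transpose_mat Gi = Gi"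
proof -
  have TGi: "transpose_mat Gi \<in> carrier_mat n n" using Gi by simp
  have "transpose_mat Gi * G = 1\<^sub>m n" using transpose_mult[OF G Gi(1)] sym Gi(2) by simp
  have "transpose_mat Gi = transpose_mat Gi * (G * Gi)" using Gi(2) right_mult_one_mat[OF TGi] by simp
  also have "\<dots> = (transpose_mat Gi * G) * Gi" using assoc_mult_mat[OF TGi G Gi(1)] by simp
  also have "\<dots> = Gi" using \<open>transpose_mat Gi * G = 1\<^sub>m n\<close> left_mult_one_mat[OF Gi(1)] by simp
  finally show ?thesis .
qed

lemma penrose_inverse_exists:
  assumes A: "A \<in> carrier_mat nr nc"
    and ker: "\<And>v. v \<in> carrier_vec nc \<Longrightarrow> A *\<^sub>v v = 0\<^sub>v nr \<Longrightarrow> v = 0\<^sub>v nc"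
  shows "\<exists>B. penrose_inverse A B"
proof -
  define G where "G = transpose_mat A * A"
  have TA: "transpose_mat A \<in> carrier_mat nc nr" and G: "G \<in> carrier_mat nc nc"
    unfolding G_def using A by auto
  have sym: "transpose_mat G = G" unfolding G_def using transpose_mult[OF TA A] by simp
  obtain Gi where Gi: "Gi \<in> carrier_mat nc nc" "Gi * G = 1\<^sub>m nc" "G * Gi = 1\<^sub>m nc"
    using det_non_zero_imp_unit[OF G det_gram_mat_neq_0[OF A ker, folded G_def]]
    unfolding Units_def ring_mat_def by auto
  define B where "B = Gi * transpose_mat A"
  have B: "B \<in> carrier_mat nc nr" unfolding B_def using Gi TA by auto
  have BA: "B * A = 1\<^sub>m nc" unfolding B_def using assoc_mult_mat[OF Gi(1) TA A] Gi(2) G_def by simp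
  have "transpose_mat (A * B) = transpose_mat B * transpose_mat A" using transpose_mult[OF A B] .
  also have "transpose_mat B = A * transpose_mat Gi"
    unfolding B_def using transpose_mult[OF Gi(1) TA] by simp
  also have "\<dots> = A * Gi" using symmetric_inverse_mat_symmetric[OF G sym Gi(1,3)] by simp
  also have "A * Gi * transpose_mat A = A * B" unfolding B_def using assoc_mult_mat[OF A Gi(1) TA] .
  finally have "transpose_mat (A * B) = A * B" .
  moreover have "A * B * A = A" using assoc_mult_mat[OF A B A] BA A by simp
  ultimately have "penrose_inverse A B" unfolding penrose_inverse_def using A B BA by auto
  then show ?thesis by blast
qed

lemma pinv_penrose_inverse:
  assumes A: "A \<in> carrier_mat nr nc"
    and ker: "\<And>v. v \<in> carrier_vec nc \<Longrightarrow> A *\<^sub>v v = 0\<^sub>v nr \<Longrightarrow> v = 0\<^sub>v nc"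
  shows "penrose_inverse A (pinv A)"
proof -
  obtain B where B: "penrose_inverse A B" using penrose_inverse_exists[OF A ker] by blast
  have "pinv A = B" unfolding pinv_def
  proof (rule the_equality)
    fix C
    assume "C \<in> carrier_mat (dim_col A) (dim_row A) \<and> A * C * A = A \<and> C * A * C = C \<and>
      transpose_mat (A * C) = A * C \<and> transpose_mat (C * A) = C * A"
    then have "penrose_inverse A C" unfolding penrose_inverse_def .
    then show "C = B" using penrose_inverse_unique[OF A B] by simp
  qed (use B in \<open>simp add: penrose_inverse_def\<close>)
  then show ?thesis using B by simp
qed

lemma mult_eq_if_cols_agree_on_row_support:
  assumes C: "C \<in> carrier_mat m n" and D: "D \<in> carrier_mat m n" and Y: "Y \<in> carrier_mat n K"
    and agree: "\<And>i j. i < m \<Longrightarrow> j \<in> S \<Longrightarrow> C $$ (i,j) = D $$ (i,j)"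
    and supp: "\<And>j k. j < n \<Longrightarrow> k < K \<Longrightarrow> j \<notin> S \<Longrightarrow> Y $$ (j,k) = 0"
  shows "C * Y = D * Y"
proof (rule eq_matI)
  fix i k assume "i < dim_row (D * Y)" "k < dim_col (D * Y)"
  then have i: "i < m" and k: "k < K" using D Y by auto
  have "C $$ (i,r) * Y $$ (r,k) = D $$ (i,r) * Y $$ (r,k)" if "r < n" for r
    using agree[OF i] supp[OF that k] by (cases "r \<in> S") auto
  then have "(\<Sum>r<n. C $$ (i,r) * Y $$ (r,k)) = (\<Sum>r<n. D $$ (i,r) * Y $$ (r,k))" by simp
  then show "(C * Y) $$ (i,k) = (D * Y) $$ (i,k)"
    using index_mult_mat_sum[OF C Y i k] index_mult_mat_sum[OF D Y i k] by simp
qed (use C D in auto)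

lemma cols_sub_projection_fixes_mult:
  assumes Phi: "Phi \<in> carrier_mat m n" and Sn: "S \<subseteq> {..<n}"
    and B: "B \<in> carrier_mat (card S) m" and ABA: "cols_sub Phi S * B * cols_sub Phi S = cols_sub Phi S"
    and Y: "Y \<in> carrier_mat n K" and supp: "\<And>j k. j < n \<Longrightarrow> k < K \<Longrightarrow> j \<notin> S \<Longrightarrow> Y $$ (j,k) = 0"
  shows "cols_sub Phi S * B * (Phi * Y) = Phi * Y"
proof -
  define A where "A = cols_sub Phi S"
  have A: "A \<in> carrier_mat m (card S)" unfolding A_def using cols_sub_carrier_mat[OF Phi Sn] .
  have AB: "A * B \<in> carrier_mat m m" using A B by simp
  have fixes_col: "(A * B * Phi) $$ (i,j) = Phi $$ (i,j)" if i: "i < m" and j: "j \<in> S" for i j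
  proof -
    have fS: "finite S" using Sn finite_subset by blast
    have a: "pick_index S j < card S" "pick S (pick_index S j) = j"
      using pick_index_less_card[OF fS j] pick_pick_index[OF fS j] by auto
    have col: "A $$ (r, pick_index S j) = Phi $$ (r,j)" if "r < m" for r
      unfolding A_def using cols_sub_index[OF Phi Sn that a(1)] a(2) by simp
    have "(A * B * Phi) $$ (i,j) = (\<Sum>r<m. (A * B) $$ (i,r) * A $$ (r, pick_index S j))"
      using index_mult_mat_sum[OF AB Phi i] j Sn col by auto
    also have "\<dots> = (A * B * A) $$ (i, pick_index S j)"
      using index_mult_mat_sum[OF AB A i a(1)] by simp
    finally show ?thesis using ABA col[OF i] unfolding A_def by simp
  qed
  have "A * B * (Phi * Y) = (A * B * Phi) * Y" using assoc_mult_mat[OF AB Phi Y] by simp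
  also have "\<dots> = Phi * Y"
    using mult_eq_if_cols_agree_on_row_support[OF _ Phi Y fixes_col supp] AB Phi by simp
  finally show ?thesis unfolding A_def .
qed

lemma projection_fixes_residual:
  fixes P A B W :: "'a :: comm_ring_1 mat"
  assumes P: "P \<in> carrier_mat m m" and A: "A \<in> carrier_mat m p" and B: "B \<in> carrier_mat p m"
    and W: "W \<in> carrier_mat m K" and PA: "P * A = A" and PW: "P * W = W"
  shows "P * ((1\<^sub>m m - A * B) * W) = (1\<^sub>m m - A * B) * W"
proof -
  have BW: "B * W \<in> carrier_mat p K" using B W by simp
  have res: "(1\<^sub>m m - A * B) * W = W - A * (B * W)"
    using minus_mult_distrib_mat[OF one_carrier_mat _ W, of "A * B"] A B W
      assoc_mult_mat[OF A B W] by simp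
  have "P * (W - A * (B * W)) = P * W - (P * A) * (B * W)"
    using mult_minus_distrib_mat[OF P W, of "A * (B * W)"] assoc_mult_mat[OF P A BW] A BW by simp
  then show ?thesis unfolding res using PA PW by simp
qed

lemma transpose_mult_through_projection:
  fixes A B C Z :: "'a :: comm_ring_1 mat"
  assumes A: "A \<in> carrier_mat m s" and B: "B \<in> carrier_mat s m" and C: "C \<in> carrier_mat m p"
    and Z: "Z \<in> carrier_mat m K"
    and sym: "transpose_mat (A * B) = A * B" and range: "A * B * Z = Z"
  shows "transpose_mat C * Z = transpose_mat (B * C) * (transpose_mat A * Z)"
proof -
  have TA: "transpose_mat A \<in> carrier_mat s m" and TB: "transpose_mat B \<in> carrier_mat m s"
    and TC: "transpose_mat C \<in> carrier_mat p m" using A B C by auto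
  have TAZ: "transpose_mat A * Z \<in> carrier_mat s K" using TA Z by simp
  have "transpose_mat (B * C) * (transpose_mat A * Z) = transpose_mat C * (transpose_mat B * (transpose_mat A * Z))"
    using transpose_mult[OF B C] assoc_mult_mat[OF TC TB TAZ] by simp
  also have "transpose_mat B * (transpose_mat A * Z) = transpose_mat (A * B) * Z"
    using transpose_mult[OF A B] assoc_mult_mat[OF TB TA Z] by simp
  finally show ?thesis using sym range by simp
qed

definition weighted_row_norm :: "(nat \<Rightarrow> real) \<Rightarrow> real mat \<Rightarrow> nat \<Rightarrow> real" where
  "weighted_row_norm q W i = (\<Sum>k<dim_col W. q k * \<bar>W $$ (i,k)\<bar>)"

lemma finite_image_less: "finite {f i | i. i < (n::nat)}"
  by (rule finite_image_set) simp

lemma norm_inf_nonneg: "0 \<le> norm_inf A"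
  unfolding norm_inf_def using finite_image_less by (intro Max_ge) auto

lemma row_abs_sum_mult_diag:
  assumes W: "W \<in> carrier_mat r K" and i: "i < r" and q: "\<forall>k<K. q k \<ge> 0"
  shows "(\<Sum>k<dim_col (W * mat_diag K q). \<bar>(W * mat_diag K q) $$ (i,k)\<bar>) = weighted_row_norm q W i"
  using W i q unfolding mat_diag_mult_right[OF W] weighted_row_norm_def
  by (auto simp: abs_mult mult.commute intro: sum.cong)

lemma weighted_row_norm_le_norm_inf:
  assumes W: "W \<in> carrier_mat r K" and i: "i < r" and q: "\<forall>k<K. q k \<ge> 0"
  shows "weighted_row_norm q W i \<le> norm_inf (W * mat_diag K q)"
proof -
  let ?WD = "W * mat_diag K q"
  have "i < dim_row ?WD" using W i by simp
  then have "(\<Sum>k<dim_col ?WD. \<bar>?WD $$ (i,k)\<bar>)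
      \<in> insert 0 {(\<Sum>k<dim_col ?WD. \<bar>?WD $$ (i',k)\<bar>) | i'. i' < dim_row ?WD}" by blast
  from Max_ge[OF finite.insertI[OF finite_image_less] this]
  show ?thesis unfolding norm_inf_def row_abs_sum_mult_diag[OF assms] .
qed

lemma norm_inf_mult_diag_attained:
  assumes W: "W \<in> carrier_mat r K" and q: "\<forall>k<K. q k \<ge> 0"
    and pos: "0 < norm_inf (W * mat_diag K q)"
  obtains i where "i < r" "norm_inf (W * mat_diag K q) = weighted_row_norm q W i"
proof -
  let ?rows = "{(\<Sum>k<dim_col (W * mat_diag K q). \<bar>(W * mat_diag K q) $$ (i,k)\<bar>) | i. i < dim_row (W * mat_diag K q)}"
  have "norm_inf (W * mat_diag K q) \<in> insert 0 ?rows" unfolding norm_inf_def using finite_image_less by (intro Max_in) auto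
  then obtain i where "i < r" "norm_inf (W * mat_diag K q)
      = (\<Sum>k<dim_col (W * mat_diag K q). \<bar>(W * mat_diag K q) $$ (i,k)\<bar>)"
    using pos W by auto
  then show ?thesis using that row_abs_sum_mult_diag[OF W _ q] by metis
qed

lemma col_abs_sum_le_norm_one:
  assumes "j < dim_col A"
  shows "(\<Sum>i<dim_row A. \<bar>A $$ (i,j)\<bar>) \<le> norm_one A"
  unfolding norm_one_def using assms finite_image_less by (intro Max_ge) auto

lemma
  assumes W1: "W1 \<in> carrier_mat r K" and W2: "W2 \<in> carrier_mat r K" and i: "i < r"
    and q: "\<forall>k<K. q k \<ge> 0"
  shows weighted_row_norm_add_le: "weighted_row_norm q (W1 + W2) i \<le> weighted_row_norm q W1 i + weighted_row_norm q W2 i"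
    and weighted_row_norm_add_ge: "weighted_row_norm q W1 i - weighted_row_norm q W2 i \<le> weighted_row_norm q (W1 + W2) i"
proof -
  have "q k * \<bar>W1 $$ (i,k) + W2 $$ (i,k)\<bar> \<le> q k * \<bar>W1 $$ (i,k)\<bar> + q k * \<bar>W2 $$ (i,k)\<bar>"
    and "q k * \<bar>W1 $$ (i,k)\<bar> - q k * \<bar>W2 $$ (i,k)\<bar> \<le> q k * \<bar>W1 $$ (i,k) + W2 $$ (i,k)\<bar>"
    if "k < K" for k
  proof -
    have "\<bar>W1 $$ (i,k) + W2 $$ (i,k)\<bar> \<le> \<bar>W1 $$ (i,k)\<bar> + \<bar>W2 $$ (i,k)\<bar>"
      and "\<bar>W1 $$ (i,k)\<bar> - \<bar>W2 $$ (i,k)\<bar> \<le> \<bar>W1 $$ (i,k) + W2 $$ (i,k)\<bar>" by arith+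
    from this[THEN mult_left_mono, of "q k"] q that
    show "q k * \<bar>W1 $$ (i,k) + W2 $$ (i,k)\<bar> \<le> q k * \<bar>W1 $$ (i,k)\<bar> + q k * \<bar>W2 $$ (i,k)\<bar>"
      and "q k * \<bar>W1 $$ (i,k)\<bar> - q k * \<bar>W2 $$ (i,k)\<bar> \<le> q k * \<bar>W1 $$ (i,k) + W2 $$ (i,k)\<bar>"
      by (simp_all add: algebra_simps)
  qed
  note termwise = this
  have norms: "weighted_row_norm q (W1 + W2) i = (\<Sum>k<K. q k * \<bar>W1 $$ (i,k) + W2 $$ (i,k)\<bar>)"
    "weighted_row_norm q W1 i = (\<Sum>k<K. q k * \<bar>W1 $$ (i,k)\<bar>)"
    "weighted_row_norm q W2 i = (\<Sum>k<K. q k * \<bar>W2 $$ (i,k)\<bar>)"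
    using W1 W2 i by (simp_all add: weighted_row_norm_def)
  have "(\<Sum>k<K. q k * \<bar>W1 $$ (i,k) + W2 $$ (i,k)\<bar>) \<le> (\<Sum>k<K. q k * \<bar>W1 $$ (i,k)\<bar> + q k * \<bar>W2 $$ (i,k)\<bar>)"
    using termwise(1) by (intro sum_mono) auto
  then show "weighted_row_norm q (W1 + W2) i \<le> weighted_row_norm q W1 i + weighted_row_norm q W2 i"
    unfolding norms sum.distrib .
  have "(\<Sum>k<K. q k * \<bar>W1 $$ (i,k)\<bar> - q k * \<bar>W2 $$ (i,k)\<bar>) \<le> (\<Sum>k<K. q k * \<bar>W1 $$ (i,k) + W2 $$ (i,k)\<bar>)"
    using termwise(2) by (intro sum_mono) auto
  then show "weighted_row_norm q W1 i - weighted_row_norm q W2 i \<le> weighted_row_norm q (W1 + W2) i"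
    unfolding norms sum_subtractf .
qed

lemma weighted_row_norm_mult_le:
  assumes A: "A \<in> carrier_mat r s" and N: "N \<in> carrier_mat s K" and i: "i < r"
    and q: "\<forall>k<K. q k \<ge> 0" and bound: "\<And>a. a < s \<Longrightarrow> weighted_row_norm q N a \<le> c"
  shows "weighted_row_norm q (A * N) i \<le> (\<Sum>a<s. \<bar>A $$ (i,a)\<bar>) * c"
proof -
  have "weighted_row_norm q (A * N) i = (\<Sum>k<K. q k * \<bar>\<Sum>a<s. A $$ (i,a) * N $$ (a,k)\<bar>)"
    unfolding weighted_row_norm_def using A N i index_mult_mat_sum[OF A N i] by simp
  also have "\<dots> \<le> (\<Sum>k<K. \<Sum>a<s. \<bar>A $$ (i,a)\<bar> * (q k * \<bar>N $$ (a,k)\<bar>))"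
  proof (rule sum_mono)
    fix k assume "k \<in> {..<K}"
    then have "0 \<le> q k" using q by simp
    have "\<bar>\<Sum>a<s. A $$ (i,a) * N $$ (a,k)\<bar> \<le> (\<Sum>a<s. \<bar>A $$ (i,a)\<bar> * \<bar>N $$ (a,k)\<bar>)"
      using sum_abs[of "\<lambda>a. A $$ (i,a) * N $$ (a,k)" "{..<s}"] by (simp add: abs_mult)
    from mult_left_mono[OF this \<open>0 \<le> q k\<close>]
    show "q k * \<bar>\<Sum>a<s. A $$ (i,a) * N $$ (a,k)\<bar> \<le> (\<Sum>a<s. \<bar>A $$ (i,a)\<bar> * (q k * \<bar>N $$ (a,k)\<bar>))"
      by (simp add: sum_distrib_left algebra_simps)
  qed
  also have "\<dots> = (\<Sum>a<s. \<Sum>k<K. \<bar>A $$ (i,a)\<bar> * (q k * \<bar>N $$ (a,k)\<bar>))"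
    by (rule sum.swap)
  also have "\<dots> = (\<Sum>a<s. \<bar>A $$ (i,a)\<bar> * weighted_row_norm q N a)"
    unfolding weighted_row_norm_def using N by (simp add: sum_distrib_left)
  also have "\<dots> \<le> (\<Sum>a<s. \<bar>A $$ (i,a)\<bar> * c)"
    using bound by (intro sum_mono mult_left_mono) auto
  finally show ?thesis by (simp add: sum_distrib_right)
qed

lemma somp_score_eq_weighted_row_norm:
  assumes Phi: "Phi \<in> carrier_mat m n" and R: "R \<in> carrier_mat m K" and j: "j < n"
  shows "somp_score Phi q R j = weighted_row_norm q (transpose_mat Phi * R) j"
proof -
  have "(transpose_mat Phi * R) $$ (j,k) = (\<Sum>i<m. R $$ (i,k) * Phi $$ (i,j))" if "k < K" for k
    using index_mult_mat_sum[OF _ R j that, of "transpose_mat Phi"] Phi j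
    by (auto simp: mult.commute intro: sum.cong)
  then show ?thesis using Phi R unfolding somp_score_def weighted_row_norm_def by simp
qed

lemma weighted_row_norm_transpose_cols_sub_mult:
  assumes Phi: "Phi \<in> carrier_mat m n" and Tn: "T \<subseteq> {..<n}" and N: "N \<in> carrier_mat m K"
    and b: "b < card T"
  shows "weighted_row_norm q (transpose_mat (cols_sub Phi T) * N) b
       = weighted_row_norm q (transpose_mat Phi * N) (pick T b)"
  unfolding weighted_row_norm_def using transpose_cols_sub_mult_index[OF Phi Tn N b] N by simp

lemma weighted_row_norm_outside_support_le:
  assumes Phi: "Phi \<in> carrier_mat m n" and Sn: "S \<subseteq> {..<n}"
    and B: "B \<in> carrier_mat (card S) m"
    and sym: "transpose_mat (cols_sub Phi S * B) = cols_sub Phi S * B"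
    and Z: "Z \<in> carrier_mat m K" and range: "cols_sub Phi S * B * Z = Z"
    and q: "\<forall>k<K. q k \<ge> 0" and j: "j < n" "j \<notin> S"
  shows "weighted_row_norm q (transpose_mat Phi * Z) j
       \<le> norm_one (B * cols_sub Phi ({..<n} - S)) * norm_inf (transpose_mat (cols_sub Phi S) * Z * mat_diag K q)"
proof -
  define Sc where "Sc = {..<n} - S"
  define M where "M = B * cols_sub Phi Sc"
  define G where "G = transpose_mat (cols_sub Phi S) * Z"
  define l where "l = pick_index Sc j"
  have Scn: "Sc \<subseteq> {..<n}" unfolding Sc_def by auto
  have A: "cols_sub Phi S \<in> carrier_mat m (card S)" using cols_sub_carrier_mat[OF Phi Sn] .
  have Ac: "cols_sub Phi Sc \<in> carrier_mat m (card Sc)" using cols_sub_carrier_mat[OF Phi Scn] .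
  have M: "M \<in> carrier_mat (card S) (card Sc)" unfolding M_def using B Ac by simp
  have G: "G \<in> carrier_mat (card S) K" unfolding G_def using A Z by simp
  have l: "l < card Sc" "pick Sc l = j"
    using pick_index_less_card[of Sc j] pick_pick_index[of Sc j] j unfolding l_def Sc_def by auto
  have "weighted_row_norm q (transpose_mat Phi * Z) j = weighted_row_norm q (transpose_mat M * G) l"
    using weighted_row_norm_transpose_cols_sub_mult[OF Phi Scn Z l(1), of q] l(2)
      transpose_mult_through_projection[OF A B Ac Z sym range]
    unfolding M_def G_def by simp
  also have "\<dots> \<le> (\<Sum>a<card S. \<bar>transpose_mat M $$ (l,a)\<bar>) * norm_inf (G * mat_diag K q)"
    using weighted_row_norm_mult_le[of "transpose_mat M" _ _ G, OF _ G l(1) q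
        weighted_row_norm_le_norm_inf[OF G _ q]] M by simp
  also have "\<dots> \<le> norm_one M * norm_inf (G * mat_diag K q)"
    using col_abs_sum_le_norm_one[of l M] M l(1) norm_inf_nonneg by (simp add: mult_right_mono)
  finally show ?thesis unfolding M_def G_def Sc_def .
qed

lemma norm_inf_attained_in_support:
  assumes Phi: "Phi \<in> carrier_mat m n" and Sn: "S \<subseteq> {..<n}" and Z: "Z \<in> carrier_mat m K"
    and q: "\<forall>k<K. q k \<ge> 0"
    and pos: "0 < norm_inf (transpose_mat (cols_sub Phi S) * Z * mat_diag K q)"
  obtains i where "i \<in> S"
    "weighted_row_norm q (transpose_mat Phi * Z) i = norm_inf (transpose_mat (cols_sub Phi S) * Z * mat_diag K q)"
proof -
  have G: "transpose_mat (cols_sub Phi S) * Z \<in> carrier_mat (card S) K"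
    using cols_sub_carrier_mat[OF Phi Sn] Z by simp
  obtain a where "a < card S"
    "norm_inf (transpose_mat (cols_sub Phi S) * Z * mat_diag K q)
       = weighted_row_norm q (transpose_mat (cols_sub Phi S) * Z) a"
    using norm_inf_mult_diag_attained[OF G q pos] by blast
  then show ?thesis
    using that[of "pick S a"] pick_in_set[of a S] weighted_row_norm_transpose_cols_sub_mult[OF Phi Sn Z]
    by simp
qed

lemma somp_argmax_in_support:
  fixes Phi Z E :: "real mat"
  assumes Phi: "Phi \<in> carrier_mat m n" and Sn: "S \<subseteq> {..<n}"
    and B: "B \<in> carrier_mat (card S) m"
    and sym: "transpose_mat (cols_sub Phi S * B) = cols_sub Phi S * B"
    and Z: "Z \<in> carrier_mat m K" and range: "cols_sub Phi S * B * Z = Z"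
    and E: "E \<in> carrier_mat m K" and q: "\<forall>k<K. q k \<ge> 0"
    and cond: "(1 - norm_one (B * cols_sub Phi ({..<n} - S)))
                 * norm_inf (transpose_mat (cols_sub Phi S) * Z * mat_diag K q)
               > 2 * norm_inf (transpose_mat Phi * E * mat_diag K q)"
    and j: "j < n" and max: "\<forall>j'<n. somp_score Phi q (Z + E) j' \<le> somp_score Phi q (Z + E) j"
  shows "j \<in> S"
proof (rule ccontr)
  assume "j \<notin> S"
  define signal where "signal = norm_inf (transpose_mat (cols_sub Phi S) * Z * mat_diag K q)"
  define noise where "noise = norm_inf (transpose_mat Phi * E * mat_diag K q)"
  define c where "c = norm_one (B * cols_sub Phi ({..<n} - S))"
  have PZ: "transpose_mat Phi * Z \<in> carrier_mat n K" and PE: "transpose_mat Phi * E \<in> carrier_mat n K"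
    using Phi Z E by auto
  have score: "somp_score Phi q (Z + E) i
      = weighted_row_norm q (transpose_mat Phi * Z + transpose_mat Phi * E) i" if "i < n" for i
    using somp_score_eq_weighted_row_norm[OF Phi _ that, of "Z + E" K] Z E
      mult_add_distrib_mat[OF transpose_carrier_mat[THEN iffD2, OF Phi] Z E] by simp
  have noise_bound: "weighted_row_norm q (transpose_mat Phi * E) i \<le> noise" if "i < n" for i
    unfolding noise_def using weighted_row_norm_le_norm_inf[OF PE that q] .
  have "0 \<le> noise" "0 \<le> signal" unfolding noise_def signal_def by (simp_all add: norm_inf_nonneg)
  with cond have "0 < signal" unfolding signal_def noise_def by (cases "signal = 0") (auto simp: signal_def)
  then obtain i where i: "i \<in> S" "weighted_row_norm q (transpose_mat Phi * Z) i = signal"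
    using norm_inf_attained_in_support[OF Phi Sn Z q] unfolding signal_def by blast
  have "i < n" using i Sn by auto
  have "signal - noise \<le> somp_score Phi q (Z + E) i"
    using i weighted_row_norm_add_ge[OF PZ PE \<open>i < n\<close> q] noise_bound[OF \<open>i < n\<close>] score[OF \<open>i < n\<close>]
    by simp
  also have "\<dots> \<le> somp_score Phi q (Z + E) j" using max \<open>i < n\<close> by blast
  also have "\<dots> \<le> c * signal + noise"
    using score[OF j] weighted_row_norm_add_le[OF PZ PE j q] noise_bound[OF j]
      weighted_row_norm_outside_support_le[OF Phi Sn B sym Z range q j \<open>j \<notin> S\<close>]
    unfolding c_def signal_def by simp
  finally have "(1 - c) * signal \<le> 2 * noise" by (simp add: algebra_simps)
  then show False using cond unfolding c_def signal_def noise_def by simp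
qed

lemma pinv_cols_sub_penrose_inverse:
  assumes Phi: "Phi \<in> carrier_mat m n" and Sn: "S \<subseteq> {..<n}"
    and rank: "vec_space.rank m (cols_sub Phi S) = card S" and TS: "T \<subseteq> S"
  shows "penrose_inverse (cols_sub Phi T) (pinv (cols_sub Phi T))"
proof -
  have kerS: "\<And>w. w \<in> carrier_vec (card S) \<Longrightarrow> cols_sub Phi S *\<^sub>v w = 0\<^sub>v m \<Longrightarrow> w = 0\<^sub>v (card S)"
    using vec_space.full_rank_mult_vec_eq_0[OF cols_sub_carrier_mat[OF Phi Sn] rank] by blast
  show ?thesis
    using pinv_penrose_inverse[OF cols_sub_carrier_mat[OF Phi]] cols_sub_mult_vec_eq_0_mono[OF Phi Sn TS kerS]
      TS Sn by blast
qed

lemma proj_carrier_mat: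
  assumes "Phi \<in> carrier_mat m n" "T \<subseteq> {..<n}"
    and "penrose_inverse (cols_sub Phi T) (pinv (cols_sub Phi T))"
  shows "proj Phi T \<in> carrier_mat m m"
  using assms cols_sub_carrier_mat[OF assms(1,2)] unfolding proj_def penrose_inverse_def by auto

lemma resid_add:
  assumes Phi: "Phi \<in> carrier_mat m n" and P: "proj Phi T \<in> carrier_mat m m"
    and Y1: "Y1 \<in> carrier_mat m K" and Y2: "Y2 \<in> carrier_mat m K"
  shows "resid Phi T (Y1 + Y2) = resid Phi T Y1 + resid Phi T Y2"
  unfolding resid_def using mult_add_distrib_mat[OF minus_carrier_mat[OF P] Y1 Y2] Phi by simp

lemma cols_sub_projection_fixes_residual:
  assumes Phi: "Phi \<in> carrier_mat m n" and Sn: "S \<subseteq> {..<n}" and TS: "T \<subseteq> S"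
    and penS: "penrose_inverse (cols_sub Phi S) B"
    and penT: "penrose_inverse (cols_sub Phi T) (pinv (cols_sub Phi T))"
    and X: "X \<in> carrier_mat n K" and supp: "\<And>j k. j < n \<Longrightarrow> k < K \<Longrightarrow> j \<notin> S \<Longrightarrow> X $$ (j,k) = 0"
  shows "cols_sub Phi S * B * ((1\<^sub>m m - proj Phi T) * (Phi * X)) = (1\<^sub>m m - proj Phi T) * (Phi * X)"
proof -
  have Tn: "T \<subseteq> {..<n}" using TS Sn by blast
  have A: "cols_sub Phi S \<in> carrier_mat m (card S)" using cols_sub_carrier_mat[OF Phi Sn] .
  have AT: "cols_sub Phi T \<in> carrier_mat m (card T)" using cols_sub_carrier_mat[OF Phi Tn] .
  have B: "B \<in> carrier_mat (card S) m" and ABA: "cols_sub Phi S * B * cols_sub Phi S = cols_sub Phi S"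
    using penS A unfolding penrose_inverse_def by auto
  have BT: "pinv (cols_sub Phi T) \<in> carrier_mat (card T) m" using penT AT unfolding penrose_inverse_def by auto
  have I: "cols_sub (1\<^sub>m n) T \<in> carrier_mat n (card T)" using cols_sub_carrier_mat[OF one_carrier_mat Tn] .
  have I_supp: "cols_sub (1\<^sub>m n) T $$ (j,b) = 0" if "j < n" "b < card T" "j \<notin> S" for j b
  proof -
    have "pick T b \<in> T" using pick_in_set[of b T] that(2) by simp
    then have "pick T b < n" "pick T b \<noteq> j" using that(3) TS Tn by auto
    then show ?thesis using cols_sub_index[OF one_carrier_mat Tn that(1,2)] that(1) by simp
  qed
  have PS: "cols_sub Phi S * B \<in> carrier_mat m m" using A B by simp
  have PX: "Phi * X \<in> carrier_mat m K" using Phi X by simp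
  have "cols_sub Phi S * B * cols_sub Phi T = cols_sub Phi T"
    unfolding cols_sub_eq_mult_cols_sub_one[OF Phi Tn]
    using cols_sub_projection_fixes_mult[OF Phi Sn B ABA I I_supp] .
  moreover have "cols_sub Phi S * B * (Phi * X) = Phi * X"
    using cols_sub_projection_fixes_mult[OF Phi Sn B ABA X supp] .
  ultimately show ?thesis
    unfolding proj_def by (rule projection_fixes_residual[OF PS AT BT PX])
qed

theorem theorem2:
  fixes Phi X E :: "real mat" and m n K t :: nat and q :: "nat \<Rightarrow> real" and sel :: "nat \<Rightarrow> nat"
    and S :: "nat set"
  assumes Phi_dim: "Phi \<in> carrier_mat m n"
    and X_dim: "X \<in> carrier_mat n K"
    and E_dim: "E \<in> carrier_mat m K"
    and unit_cols: "\<forall>j < n. (\<Sum>i<m. (Phi $$ (i,j))\<^sup>2) = 1"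
    and S_def: "S = supp_rows X"
    and full_rank: "vec_space.rank m (cols_sub Phi S) = card S"
    and q_nonneg: "\<forall>k < K. q k \<ge> 0"
    and run: "somp_run Phi q (Phi * X + E) sel t"
    and t_lt: "t < card S"
    and St_sub: "sel ` {..<t} \<subseteq> S"
    and cond: "(1 - norm_one (pinv (cols_sub Phi S) * cols_sub Phi ({..<n} - S)))
                 * norm_inf (transpose_mat (cols_sub Phi S) * ((1\<^sub>m m - proj Phi (sel ` {..<t})) * (Phi * X))
                             * mat_diag K q)
               > 2 * norm_inf (transpose_mat Phi * ((1\<^sub>m m - proj Phi (sel ` {..<t})) * E) * mat_diag K q)"
  shows "\<forall>j. somp_argmax Phi q (Phi * X + E) (sel ` {..<t}) j \<longrightarrow> j \<in> S"
proof (intro allI impI)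
  fix j assume "somp_argmax Phi q (Phi * X + E) (sel ` {..<t}) j"
  define T where "T = sel ` {..<t}"
  have Sn: "S \<subseteq> {..<n}" and supp: "\<And>r k. r < n \<Longrightarrow> k < K \<Longrightarrow> r \<notin> S \<Longrightarrow> X $$ (r,k) = 0"
    using X_dim unfolding S_def supp_rows_def by auto
  have TS: "T \<subseteq> S" unfolding T_def using St_sub .
  have penS: "penrose_inverse (cols_sub Phi S) (pinv (cols_sub Phi S))"
    and penT: "penrose_inverse (cols_sub Phi T) (pinv (cols_sub Phi T))"
    using pinv_cols_sub_penrose_inverse[OF Phi_dim Sn full_rank] TS by auto
  have B: "pinv (cols_sub Phi S) \<in> carrier_mat (card S) m"
    and sym: "transpose_mat (cols_sub Phi S * pinv (cols_sub Phi S)) = cols_sub Phi S * pinv (cols_sub Phi S)"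
    using penS cols_sub_carrier_mat[OF Phi_dim Sn] unfolding penrose_inverse_def by auto
  have P: "proj Phi T \<in> carrier_mat m m" using proj_carrier_mat[OF Phi_dim _ penT] TS Sn by blast
  have resid: "resid Phi T Y = (1\<^sub>m m - proj Phi T) * Y" for Y using Phi_dim unfolding resid_def by simp
  have Z: "resid Phi T (Phi * X) \<in> carrier_mat m K" and E': "resid Phi T E \<in> carrier_mat m K"
    unfolding resid using P Phi_dim X_dim E_dim by auto
  show "j \<in> S"
  proof (rule somp_argmax_in_support[OF Phi_dim Sn B sym Z _ E' q_nonneg])
    show "cols_sub Phi S * pinv (cols_sub Phi S) * resid Phi T (Phi * X) = resid Phi T (Phi * X)"
      unfolding resid using cols_sub_projection_fixes_residual[OF Phi_dim Sn TS penS penT X_dim supp] .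
  qed (use cond[folded T_def] \<open>somp_argmax Phi q (Phi * X + E) (sel ` {..<t}) j\<close>[folded T_def]
      Phi_dim resid_add[OF Phi_dim P mult_carrier_mat[OF Phi_dim X_dim] E_dim]
      in \<open>auto simp: resid somp_argmax_def\<close>)
qed

end
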